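(* Assume (A1)–(A4) below. Let $\gamma<\min(H,\hat H)$ and $1/p\in(1/3,\gamma)$. Then for all $0\le s<t\le T$ and all $\epsilon\in(0,1]$, $$\|X^\epsilon_t-X^\epsilon_s\|\le C_2(t-s)^\gamma,$$ where $C_2>0$ depends on $C_1, C_p, C_f, C_h, \|f\|_\infty$ and $|||\boldsymbol{\omega_1}|||_{\gamma,[0,T]}$, but is independent of $\epsilon$.
   Context: $T>0$, $H,\hat H\in(1/3,1/2]$, $q=p/2$. $\omega_1$ is a sample path of a $d_1$-dimensional FBM with Hurst index $H$, lifted to the geometric rough path $\boldsymbol{\omega_1}=(\omega_1,\mathbb{W}_1)$ ($\mathbb{W}^{i,j}_{1,s,t}=\int_s^t(\omega_1^i(r)-\omega_1^i(s))d\omega_1^j(r)$, $i\ne j$; $\mathbb{W}^{i,i}_{1,s,t}=(\omega_1^i(t)-\omega_1^i(s))^2/2$), which is a $\gamma$-Hölder rough path; $|||\boldsymbol{\omega_1}|||_{\gamma,I}=\sup_{s<t\in I}\frac{\|\omega_1(t)-\omega_1(s)\|}{(t-s)^\gamma}+\big(\sup_{s<t\in I}\frac{\|\mathbb{W}_{1,s,t}\|}{(t-s)^{2\gamma}}\big)^{1/2}$. $\omega_2$ is an independent two-sided $m$-dimensional FBM path with Hurst $\hat H$; $\omega_{2,\epsilon}(t)=\omega_2(t/\epsilon)$. Assumptions: (A1) $f:\mathbb{R}^n\times\mathbb{R}^m\to\mathbb{R}^n$ globally Lipschitz with constant $C_f$; (A2) $h\in C_b^3(\mathbb{R}^n,\mathcal{L}(\mathbb{R}^{d_1},\mathbb{R}^n))$,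 $C_h=\max\{\|h\|_\infty,\|Dh\|_\infty,\|D^2h\|_\infty,\|D^3h\|_\infty\}$; (A3) $g:\mathbb{R}^n\times\mathbb{R}^m\to\mathbb{R}^m$ globally Lipschitz; (A4) $f$ bounded with sup norm $\|f\|_\infty$. $(X^\epsilon,Y^\epsilon)$ solves on $[0,T]$: $X^\epsilon_t=X_0+\int_0^tf(X^\epsilon_r,Y^\epsilon_r)dr+\int_0^th(X^\epsilon_r)d\boldsymbol{\omega_1}(r)$ (Gubinelli rough integral, Gubinelli derivative of the integrand $Dh(X^\epsilon)h(X^\epsilon)$), $Y^\epsilon_t=Y_0+\frac1\epsilon\int_0^tg(X^\epsilon_r,Y^\epsilon_r)dr+\omega_{2,\epsilon}(t)$. $C_1$ is an $\epsilon$-independent constant with $\|X^\epsilon\|_{\infty,[0,T]}+|||X^\epsilon|||_{p\text{-var},[0,T]}+|||R^{X^\epsilon}|||_{q\text{-var},[0,T]^2}\le C_1$, where $R^{X}_{s,t}=X_t-X_s-h(X_s)(\omega_1(t)-\omega_1(s))$. $C_p>1$ is the $p$-dependent constant of the rough-integral sewing estimate $\|\int_s^ty_ud\boldsymbol{\omega_1}-y_s\omega_{1,s,t}-y'_s\mathbb{W}_{1,s,t}\|\le C_p(|||\omega_1|||_{p\text{-var},[s,t]}|||R^y|||_{q\text{-var},[s,t]^2}+|||y'|||_{p\text{-var},[s,t]}|||\mathbb{W}_1|||_{q\text{-var},[s,t]^2})$. *)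

theory Defs
  imports "HOL-Analysis.Analysis"
begin

definition is_partition :: "(nat \<Rightarrow> real) \<Rightarrow> nat \<Rightarrow> real \<Rightarrow> real \<Rightarrow> bool" where
  "is_partition u k s t \<longleftrightarrow> u 0 = s \<and> u k = t \<and> (\<forall>i<k. u i < u (Suc i))"

definition pvar_sums :: "(real \<Rightarrow> 'a::real_normed_vector) \<Rightarrow> real \<Rightarrow> real \<Rightarrow> real \<Rightarrow> real set" where
  "pvar_sums x p s t =
     {(\<Sum>i<k. norm (x (u (Suc i)) - x (u i)) powr p) | u k. is_partition u k s t}"

definition finite_pvar :: "(real \<Rightarrow> 'a::real_normed_vector) \<Rightarrow> real \<Rightarrow> real \<Rightarrow> real \<Rightarrow> bool" where
  "finite_pvar x p s t \<longleftrightarrow> bdd_above (pvar_sums x p s t)"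

text \<open>The p-variation seminorm |||x|||_{p-var,[s,t]} (meaningful when finite_pvar holds).\<close>
definition pvar :: "(real \<Rightarrow> 'a::real_normed_vector) \<Rightarrow> real \<Rightarrow> real \<Rightarrow> real \<Rightarrow> real" where
  "pvar x p s t = (Sup (pvar_sums x p s t)) powr (1 / p)"

definition qvar2_sums :: "(real \<Rightarrow> real \<Rightarrow> 'a::real_normed_vector) \<Rightarrow> real \<Rightarrow> real \<Rightarrow> real \<Rightarrow> real set" where
  "qvar2_sums R q s t =
     {(\<Sum>i<k. norm (R (u i) (u (Suc i))) powr q) | u k. is_partition u k s t}"

definition finite_qvar2 :: "(real \<Rightarrow> real \<Rightarrow> 'a::real_normed_vector) \<Rightarrow> real \<Rightarrow> real \<Rightarrow> real \<Rightarrow> bool" where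
  "finite_qvar2 R q s t \<longleftrightarrow> bdd_above (qvar2_sums R q s t)"

definition qvar2 :: "(real \<Rightarrow> real \<Rightarrow> 'a::real_normed_vector) \<Rightarrow> real \<Rightarrow> real \<Rightarrow> real \<Rightarrow> real" where
  "qvar2 R q s t = (Sup (qvar2_sums R q s t)) powr (1 / q)"

definition supnorm :: "(real \<Rightarrow> 'a::real_normed_vector) \<Rightarrow> real \<Rightarrow> real \<Rightarrow> real" where
  "supnorm x a b = Sup ((\<lambda>t. norm (x t)) ` {a..b})"

definition holder1_set :: "(real \<Rightarrow> 'a::real_normed_vector) \<Rightarrow> real \<Rightarrow> real \<Rightarrow> real \<Rightarrow> real set" where
  "holder1_set w \<gamma> a b = {norm (w t - w s) / (t - s) powr \<gamma> | s t. a \<le> s \<and> s < t \<and> t \<le> b}"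

definition holder2_set :: "(real \<Rightarrow> real \<Rightarrow> 'a::real_normed_vector) \<Rightarrow> real \<Rightarrow> real \<Rightarrow> real \<Rightarrow> real set" where
  "holder2_set W \<gamma> a b = {norm (W s t) / (t - s) powr (2 * \<gamma>) | s t. a \<le> s \<and> s < t \<and> t \<le> b}"

definition rp_holder_norm ::
  "(real \<Rightarrow> 'a::real_normed_vector) \<Rightarrow> (real \<Rightarrow> real \<Rightarrow> 'b::real_normed_vector) \<Rightarrow> real \<Rightarrow> real \<Rightarrow> real \<Rightarrow> real" where
  "rp_holder_norm w W \<gamma> a b = Sup (holder1_set w \<gamma> a b) + sqrt (Sup (holder2_set W \<gamma> a b))"

definition outer :: "real^'d \<Rightarrow> real^'d \<Rightarrow> real^'d^'d" where
  "outer a b = (\<chi> i j. a $ i * b $ j)"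

text \<open>(w,W) is a geometric gamma-Hoelder rough path on [a,b]:
  Chen's relation, geometricity (symmetric part of W = half the tensor square of the
  increment, in particular W^{ii}_{s,t} = (w^i_t - w^i_s)^2/2), finite gamma-Hoelder norms.\<close>
definition geometric_holder_rough_path ::
  "(real \<Rightarrow> real^'d) \<Rightarrow> (real \<Rightarrow> real \<Rightarrow> real^'d^'d) \<Rightarrow> real \<Rightarrow> real \<Rightarrow> real \<Rightarrow> bool" where
  "geometric_holder_rough_path w W \<gamma> a b \<longleftrightarrow>
     (\<forall>s u t. a \<le> s \<and> s \<le> u \<and> u \<le> t \<and> t \<le> b \<longrightarrow>
        W s t = W s u + W u t + outer (w u - w s) (w t - w u)) \<and>
     (\<forall>s t i j. a \<le> s \<and> s \<le> t \<and> t \<le> b \<longrightarrow>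
        W s t $ i $ j + W s t $ j $ i = (w t $ i - w s $ i) * (w t $ j - w s $ j)) \<and>
     (\<forall>s t i. a \<le> s \<and> s \<le> t \<and> t \<le> b \<longrightarrow>
        W s t $ i $ i = (w t $ i - w s $ i)^2 / 2) \<and>
     bdd_above (holder1_set w \<gamma> a b) \<and> bdd_above (holder2_set W \<gamma> a b)"

text \<open>Second order term y'_s W_{s,t} for y' in L(R^d, L(R^d, R^n)) (matrices as L(R^d,R^n)).\<close>
definition second_order_term :: "((real^'d) \<Rightarrow>\<^sub>L (real^'d^'n)) \<Rightarrow> real^'d^'d \<Rightarrow> real^'n" where
  "second_order_term A V = (\<Sum>i\<in>UNIV. \<Sum>j\<in>UNIV. V $ i $ j *\<^sub>R (blinfun_apply A (axis i 1) *v axis j 1))"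

definition has_rough_integral ::
  "(real \<Rightarrow> real^'d) \<Rightarrow> (real \<Rightarrow> real \<Rightarrow> real^'d^'d) \<Rightarrow> (real \<Rightarrow> real^'d^'n) \<Rightarrow>
   (real \<Rightarrow> ((real^'d) \<Rightarrow>\<^sub>L (real^'d^'n))) \<Rightarrow> real \<Rightarrow> real \<Rightarrow> real^'n \<Rightarrow> bool" where
  "has_rough_integral w W y y' s t I \<longleftrightarrow>
     (\<forall>e>0. \<exists>\<delta>>0. \<forall>u k. is_partition u k s t \<and> (\<forall>i<k. u (Suc i) - u i < \<delta>) \<longrightarrow>
        norm ((\<Sum>i<k. y (u i) *v (w (u (Suc i)) - w (u i))
                      + second_order_term (y' (u i)) (W (u i) (u (Suc i)))) - I) < e)"

definition ctrl_remainder ::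
  "(real \<Rightarrow> real^'d) \<Rightarrow> (real \<Rightarrow> real^'d^'n) \<Rightarrow> (real \<Rightarrow> ((real^'d) \<Rightarrow>\<^sub>L (real^'d^'n))) \<Rightarrow>
   real \<Rightarrow> real \<Rightarrow> (real^'d^'n)" where
  "ctrl_remainder w y y' s t = y t - y s - blinfun_apply (y' s) (w t - w s)"

definition sewing_constant ::
  "real \<Rightarrow> (real \<Rightarrow> real^'d) \<Rightarrow> (real \<Rightarrow> real \<Rightarrow> real^'d^'d) \<Rightarrow> real \<Rightarrow> real \<Rightarrow> ('n::finite) itself \<Rightarrow> bool" where
  "sewing_constant Cp w W p T (_ :: 'n itself) \<longleftrightarrow>
     (\<forall>(y :: real \<Rightarrow> real^'d^'n) y' s t I.
        0 \<le> s \<and> s < t \<and> t \<le> T \<and> has_rough_integral w W y y' s t I \<and>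
        finite_pvar y' p s t \<and> finite_qvar2 (ctrl_remainder w y y') (p / 2) s t \<longrightarrow>
        norm (I - y s *v (w t - w s) - second_order_term (y' s) (W s t))
          \<le> Cp * (pvar w p s t * qvar2 (ctrl_remainder w y y') (p / 2) s t
                  + pvar y' p s t * qvar2 W (p / 2) s t))"

definition Cb3_with ::
  "(real^'n \<Rightarrow> real^'d^'n) \<Rightarrow> (real^'n \<Rightarrow> ((real^'n) \<Rightarrow>\<^sub>L (real^'d^'n))) \<Rightarrow>
   (real^'n \<Rightarrow> ((real^'n) \<Rightarrow>\<^sub>L ((real^'n) \<Rightarrow>\<^sub>L (real^'d^'n)))) \<Rightarrow>
   (real^'n \<Rightarrow> ((real^'n) \<Rightarrow>\<^sub>L ((real^'n) \<Rightarrow>\<^sub>L ((real^'n) \<Rightarrow>\<^sub>L (real^'d^'n))))) \<Rightarrow> bool" where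
  "Cb3_with h Dh D2h D3h \<longleftrightarrow>
     (\<forall>x. (h has_derivative blinfun_apply (Dh x)) (at x)) \<and>
     (\<forall>x. (Dh has_derivative blinfun_apply (D2h x)) (at x)) \<and>
     (\<forall>x. (D2h has_derivative blinfun_apply (D3h x)) (at x)) \<and>
     continuous_on UNIV D3h \<and>
     bounded (range h) \<and> bounded (range Dh) \<and> bounded (range D2h) \<and> bounded (range D3h)"

definition C_h_const ::
  "(real^'n \<Rightarrow> real^'d^'n) \<Rightarrow> (real^'n \<Rightarrow> ((real^'n) \<Rightarrow>\<^sub>L (real^'d^'n))) \<Rightarrow>
   (real^'n \<Rightarrow> ((real^'n) \<Rightarrow>\<^sub>L ((real^'n) \<Rightarrow>\<^sub>L (real^'d^'n)))) \<Rightarrow>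
   (real^'n \<Rightarrow> ((real^'n) \<Rightarrow>\<^sub>L ((real^'n) \<Rightarrow>\<^sub>L ((real^'n) \<Rightarrow>\<^sub>L (real^'d^'n))))) \<Rightarrow> real" where
  "C_h_const h Dh D2h D3h =
     max (max (SUP x. norm (h x)) (SUP x. norm (Dh x))) (max (SUP x. norm (D2h x)) (SUP x. norm (D3h x)))"

definition gub_deriv ::
  "(real^'n \<Rightarrow> real^'d^'n) \<Rightarrow> (real^'n \<Rightarrow> ((real^'n) \<Rightarrow>\<^sub>L (real^'d^'n))) \<Rightarrow> real^'n \<Rightarrow> ((real^'d) \<Rightarrow>\<^sub>L (real^'d^'n))" where
  "gub_deriv h Dh x = Blinfun (\<lambda>v. blinfun_apply (Dh x) (h x *v v))"

definition solves_slow_fast ::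
  "real \<Rightarrow> (real \<Rightarrow> real^'d) \<Rightarrow> (real \<Rightarrow> real \<Rightarrow> real^'d^'d) \<Rightarrow> (real \<Rightarrow> real^'m) \<Rightarrow>
   (real^'n \<Rightarrow> real^'m \<Rightarrow> real^'n) \<Rightarrow> (real^'n \<Rightarrow> real^'d^'n) \<Rightarrow>
   (real^'n \<Rightarrow> ((real^'n) \<Rightarrow>\<^sub>L (real^'d^'n))) \<Rightarrow> (real^'n \<Rightarrow> real^'m \<Rightarrow> real^'m) \<Rightarrow>
   real^'n \<Rightarrow> real^'m \<Rightarrow> real \<Rightarrow> (real \<Rightarrow> real^'n) \<Rightarrow> (real \<Rightarrow> real^'m) \<Rightarrow> bool" where
  "solves_slow_fast T w1 W1 w2 f h Dh g X0 Y0 \<epsilon> X Y \<longleftrightarrow>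
     continuous_on {0..T} X \<and> continuous_on {0..T} Y \<and>
     (\<forall>t\<in>{0..T}. (\<lambda>r. f (X r) (Y r)) integrable_on {0..t} \<and>
        has_rough_integral w1 W1 (\<lambda>r. h (X r)) (\<lambda>r. gub_deriv h Dh (X r)) 0 t
          (X t - X0 - integral {0..t} (\<lambda>r. f (X r) (Y r)))) \<and>
     (\<forall>t\<in>{0..T}. (\<lambda>r. g (X r) (Y r)) integrable_on {0..t} \<and>
        Y t = Y0 + (1 / \<epsilon>) *\<^sub>R integral {0..t} (\<lambda>r. g (X r) (Y r)) + w2 (t / \<epsilon>))"

definition sol_remainder ::
  "(real \<Rightarrow> real^'d) \<Rightarrow> (real^'n \<Rightarrow> real^'d^'n) \<Rightarrow> (real \<Rightarrow> real^'n) \<Rightarrow> real \<Rightarrow> real \<Rightarrow> real^'n" where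
  "sol_remainder w h X s t = X t - X s - h (X s) *v (w t - w s)"

end

theory Submission
  imports Defs
begin

text \<open>
  Subtracting the equation for X at time s from the one at time t, the increment X t - X s
  is the drift integral over [s,t], of size at most sup |f| (t - s), plus the rough integral
  of h(X) over [s,t]. By the sewing estimate the latter is h(X s)(\<omega> t - \<omega> s) + Dh(X s) h(X s) W s t
  up to an error controlled by the variation norms of \<omega> and W on [s,t] times those of the
  Gubinelli derivative Dh(X) h(X) and of the remainder of h(X). Since p \<gamma> \<ge> 1, the \<gamma>-Hoelder
  bounds on \<omega> and W turn into variation bounds of order (t - s) powr \<gamma> and (t - s) powr 2\<gamma>
  on [s,t], while Taylor's formula for h bounds the variations of Dh(X) h(X) and of the
  remainder of h(X) by C_h and the a priori bound C_1. None of this involves \<epsilon>, and the powers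
  (t - s) and (t - s) powr 2\<gamma> are absorbed into (t - s) powr \<gamma> because t - s \<le> T.
\<close>

section \<open>Real inequalities\<close>

lemma norm_matrix_vector_mult_le:
  fixes A :: "real^'n^'m"
  shows "norm (A *v x) \<le> real CARD('m) * real CARD('n) * norm A * norm x"
proof -
  have "onorm ((*v) A) \<le> real CARD('m) * real CARD('n) * norm A"
  proof (rule onorm_le_matrix_component)
    fix i j show "\<bar>A $ i $ j\<bar> \<le> norm A"
      using component_le_norm_cart[of "A $ i" j] Finite_Cartesian_Product.norm_nth_le[of A i] by linarith
  qed
  moreover have "norm (A *v x) \<le> onorm ((*v) A) * norm x"
    by (rule onorm) simp
  ultimately show ?thesis
    by (meson mult_right_mono norm_ge_zero order_trans)
qed

lemma add_powr_le_powr_add: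
  fixes a b r :: real
  assumes "0 \<le> a" "0 \<le> b" "1 \<le> r"
  shows "a powr r + b powr r \<le> (a + b) powr r"
proof (cases "a + b = 0")
  case True
  then have "a = 0" "b = 0" using assms by auto
  then show ?thesis by simp
next
  case False
  define S where "S = a + b"
  have S: "0 < S" using False assms unfolding S_def by auto
  have frac: "(x / S) powr r \<le> x / S" if "0 \<le> x" "x \<le> S" for x
    using that S assms(3) by (cases "x = 0") (auto intro: powr_le_one_le)
  have "a powr r + b powr r = S powr r * ((a / S) powr r + (b / S) powr r)"
    using S assms by (simp add: powr_divide distrib_left)
  also have "\<dots> \<le> S powr r * (a / S + b / S)"
    using assms by (intro mult_left_mono add_mono frac) (auto simp: S_def)
  also have "\<dots> = S powr r"
    using S by (simp add: S_def add_divide_distrib[symmetric])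
  finally show ?thesis by (simp add: S_def)
qed

lemma sum_powr_le_powr_sum:
  fixes f :: "'a \<Rightarrow> real"
  assumes "finite A" "\<And>i. i \<in> A \<Longrightarrow> 0 \<le> f i" "1 \<le> r"
  shows "(\<Sum>i\<in>A. f i powr r) \<le> (\<Sum>i\<in>A. f i) powr r"
  using assms
proof (induction A rule: finite_induct)
  case (insert x F)
  then have "(\<Sum>i\<in>insert x F. f i powr r) \<le> f x powr r + (\<Sum>i\<in>F. f i) powr r"
    by simp
  also have "\<dots> \<le> (f x + (\<Sum>i\<in>F. f i)) powr r"
    using insert by (intro add_powr_le_powr_add) (auto intro: sum_nonneg)
  finally show ?case using insert by simp
qed simp

lemma powr_add_le_two_powr:
  fixes a b q :: real
  assumes "0 \<le> a" "0 \<le> b" "0 \<le> q"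
  shows "(a + b) powr q \<le> 2 powr q * (a powr q + b powr q)"
proof -
  have "(a + b) powr q \<le> (2 * max a b) powr q"
    using assms by (intro powr_mono2) auto
  also have "\<dots> = 2 powr q * max a b powr q"
    using assms by (simp add: powr_mult)
  also have "\<dots> \<le> 2 powr q * (a powr q + b powr q)"
    by (intro mult_left_mono) (auto simp: max_def)
  finally show ?thesis .
qed

lemma powr_le_scaled_powr:
  fixes x T \<gamma> \<beta> :: real
  assumes "0 < x" "x \<le> T" "\<gamma> \<le> \<beta>"
  shows "x powr \<beta> \<le> T powr (\<beta> - \<gamma>) * x powr \<gamma>"
proof -
  have "x powr \<beta> = x powr (\<beta> - \<gamma>) * x powr \<gamma>"
    by (simp add: powr_add[symmetric])
  also have "\<dots> \<le> T powr (\<beta> - \<gamma>) * x powr \<gamma>"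
    using assms by (intro mult_right_mono powr_mono2) auto
  finally show ?thesis .
qed

section \<open>Partitions and variation norms\<close>

lemma is_partition_mono:
  assumes "is_partition u k s t" "i \<le> j" "j \<le> k"
  shows "u i \<le> u j"
  using assms(2,3)
proof (induction j)
  case (Suc j)
  show ?case
  proof (cases "i = Suc j")
    case False
    then have "u i \<le> u j" using Suc by simp
    also have "u j \<le> u (Suc j)"
      using assms(1) Suc.prems unfolding is_partition_def by (simp add: less_imp_le)
    finally show ?thesis .
  qed simp
qed simp

lemma is_partition_subinterval:
  assumes "is_partition u k s t" "i < k"
  shows "s \<le> u i" "u i < u (Suc i)" "u (Suc i) \<le> t"
  using is_partition_mono[OF assms(1), of 0 i] is_partition_mono[OF assms(1), of "Suc i" k] assms
  by (auto simp: is_partition_def)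

lemma is_partition_telescope:
  "is_partition u k s t \<Longrightarrow> (\<Sum>i<k. u (Suc i) - u i) = t - s"
  by (simp add: is_partition_def sum_lessThan_telescope)

lemma fine_partition_exists:
  assumes "s < t" "0 < \<delta>"
  obtains u k where "is_partition u k s t" "\<forall>i<k. u (Suc i) - u i < \<delta>"
proof -
  obtain k :: nat where k: "(t - s) / \<delta> < real k"
    using reals_Archimedean2 by blast
  moreover have "0 < (t - s) / \<delta>"
    using assms by simp
  ultimately have k0: "0 < real k"
    by linarith
  define u where "u i = s + (t - s) * real i / real k" for i
  have step: "u (Suc i) - u i = (t - s) / real k" for i
    unfolding u_def by (simp add: add_divide_distrib distrib_left)
  have "0 < (t - s) / real k"
    using k0 assms(1) by simp
  then have "u i < u (Suc i)" for i
    using step[of i] by linarith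
  then have "is_partition u k s t"
    unfolding is_partition_def using k0 by (simp add: u_def)
  moreover have "(t - s) / real k < \<delta>"
    using k k0 assms by (simp add: divide_less_eq mult.commute pos_divide_less_eq)
  ultimately show ?thesis using that step by auto
qed

definition join_partition :: "(nat \<Rightarrow> real) \<Rightarrow> nat \<Rightarrow> (nat \<Rightarrow> real) \<Rightarrow> nat \<Rightarrow> real" where
  "join_partition v m u i = (if i \<le> m then v i else u (i - m))"

lemma join_partition_left:
  "i < m \<Longrightarrow> join_partition v m u i = v i \<and> join_partition v m u (Suc i) = v (Suc i)"
  by (simp add: join_partition_def)

lemma join_partition_right:
  assumes "v m = u 0"
  shows "join_partition v m u (m + i) = u i \<and> join_partition v m u (Suc (m + i)) = u (Suc i)"
  using assms by (cases i) (auto simp: join_partition_def)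

lemma join_partition_steps:
  assumes "v m = u 0" "\<forall>i<m. P (v i) (v (Suc i))" "\<forall>i<k. P (u i) (u (Suc i))"
  shows "\<forall>i<m + k. P (join_partition v m u i) (join_partition v m u (Suc i))"
proof (intro allI impI)
  fix i assume "i < m + k"
  then consider "i < m" | j where "i = m + j" "j < k"
    by (metis add_less_cancel_left le_Suc_ex not_less)
  then show "P (join_partition v m u i) (join_partition v m u (Suc i))"
    by cases (use assms join_partition_left join_partition_right[of v m u, OF assms(1)] in auto)
qed

lemma is_partition_join:
  assumes v: "is_partition v m a s" and u: "is_partition u k s t"
  shows "is_partition (join_partition v m u) (m + k) a t"
proof -
  have vu: "v m = u 0" using u v by (simp add: is_partition_def)
  have "join_partition v m u (m + k) = t"
    using join_partition_right[of v m u k, OF vu] u by (simp add: is_partition_def)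
  moreover have "\<forall>i<m + k. join_partition v m u i < join_partition v m u (Suc i)"
    using u v by (intro join_partition_steps[of v m u, OF vu]) (simp_all add: is_partition_def)
  ultimately show ?thesis
    using v by (simp add: is_partition_def join_partition_def)
qed

lemma sum_join_partition:
  assumes "v m = u 0"
  shows "(\<Sum>i<m + k. F (join_partition v m u i) (join_partition v m u (Suc i)))
    = (\<Sum>i<m. F (v i) (v (Suc i))) + (\<Sum>i<k. F (u i) (u (Suc i)))"
proof -
  have "(\<Sum>i<m + k. F (join_partition v m u i) (join_partition v m u (Suc i)))
      = (\<Sum>i<m. F (join_partition v m u i) (join_partition v m u (Suc i)))
        + (\<Sum>i<k. F (join_partition v m u (m + i)) (join_partition v m u (Suc (m + i))))"
    by (induction k) (simp_all add: add.assoc)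
  then show ?thesis
    using join_partition_left join_partition_right[of v m u, OF assms] by simp
qed

lemma is_partition_extend:
  fixes F :: "real \<Rightarrow> real \<Rightarrow> real"
  assumes "is_partition u k s t" "a \<le> s" "t \<le> b" "\<And>x y. 0 \<le> F x y"
  shows "\<exists>v m. is_partition v m a b \<and> (\<Sum>i<k. F (u i) (u (Suc i))) \<le> (\<Sum>i<m. F (v i) (v (Suc i)))"
proof -
  have left: "\<exists>v m. is_partition v m a t \<and> (\<Sum>i<k. F (u i) (u (Suc i))) \<le> (\<Sum>i<m. F (v i) (v (Suc i)))"
  proof (cases "a = s")
    case False
    define v where "v i = (if i = 0 then a else s)" for i :: nat
    have "is_partition v 1 a s"
      using False assms(2) by (simp add: is_partition_def v_def)
    moreover have vu: "v 1 = u 0"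
      using assms(1) by (simp add: is_partition_def v_def)
    moreover have "(\<Sum>i<k. F (u i) (u (Suc i)))
        \<le> (\<Sum>i<1 + k. F (join_partition v 1 u i) (join_partition v 1 u (Suc i)))"
      using sum_join_partition[of v 1 u F k, OF vu] assms(4)[of a s] by (simp add: v_def)
    ultimately show ?thesis
      using is_partition_join[OF _ assms(1)] by blast
  qed (use assms(1) in \<open>intro exI[of _ u] exI[of _ k], simp\<close>)
  then obtain v m where v: "is_partition v m a t"
    and le: "(\<Sum>i<k. F (u i) (u (Suc i))) \<le> (\<Sum>i<m. F (v i) (v (Suc i)))"
    by blast
  show ?thesis
  proof (cases "t = b")
    case False
    define w where "w i = (if i = 0 then t else b)" for i :: nat
    have "is_partition w 1 t b"
      using False assms(3) by (simp add: is_partition_def w_def)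
    moreover have vw: "v m = w 0"
      using v by (simp add: is_partition_def w_def)
    moreover have "(\<Sum>i<k. F (u i) (u (Suc i)))
        \<le> (\<Sum>i<m + 1. F (join_partition v m w i) (join_partition v m w (Suc i)))"
      using sum_join_partition[of v m w F 1, OF vw] le assms(4)[of t b] by (simp add: w_def)
    ultimately show ?thesis
      using is_partition_join[OF v] by blast
  qed (use v le in \<open>intro exI[of _ v] exI[of _ m], simp\<close>)
qed

lemma qvar2_sums_nonempty: "s < t \<Longrightarrow> norm (R s t) powr q \<in> qvar2_sums R q s t"
  unfolding qvar2_sums_def
  by (rule CollectI, rule exI[of _ "\<lambda>i. if i = 0 then s else t"], rule exI[of _ 1])
     (simp add: is_partition_def)

lemma Sup_qvar2_sums_nonneg:
  assumes "s < t" "finite_qvar2 R q s t"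
  shows "0 \<le> Sup (qvar2_sums R q s t)"
  using cSup_upper[OF qvar2_sums_nonempty[OF assms(1)]] assms(2)
  unfolding finite_qvar2_def by (meson powr_ge_zero order_trans)

lemma qvar2_powr_eq_Sup:
  assumes "s < t" "finite_qvar2 R q s t" "q \<noteq> 0"
  shows "qvar2 R q s t powr q = Sup (qvar2_sums R q s t)"
  using Sup_qvar2_sums_nonneg[OF assms(1,2)] assms(3) by (simp add: qvar2_def powr_powr)

lemma pvar_eq_qvar2_increments:
  "pvar_sums x p s t = qvar2_sums (\<lambda>a b. x b - x a) p s t"
  "finite_pvar x p s t = finite_qvar2 (\<lambda>a b. x b - x a) p s t"
  "pvar x p s t = qvar2 (\<lambda>a b. x b - x a) p s t"
  by (simp_all add: pvar_sums_def qvar2_sums_def finite_pvar_def finite_qvar2_def pvar_def qvar2_def)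

lemma qvar2_sum_le_Sup:
  assumes "is_partition u k s t" "a \<le> s" "t \<le> b" "finite_qvar2 R q a b"
  shows "(\<Sum>i<k. norm (R (u i) (u (Suc i))) powr q) \<le> Sup (qvar2_sums R q a b)"
proof -
  obtain v m where v: "is_partition v m a b"
    and le: "(\<Sum>i<k. norm (R (u i) (u (Suc i))) powr q) \<le> (\<Sum>i<m. norm (R (v i) (v (Suc i))) powr q)"
    using is_partition_extend[OF assms(1-3), of "\<lambda>x y. norm (R x y) powr q"] by auto
  have "(\<Sum>i<m. norm (R (v i) (v (Suc i))) powr q) \<in> qvar2_sums R q a b"
    unfolding qvar2_sums_def using v by blast
  with assms(4) le show ?thesis
    unfolding finite_qvar2_def by (meson cSup_upper order_trans)
qed

lemma qvar2_le_if_sums_le: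
  assumes "s < t" "0 < q"
    and sums: "\<And>u k. is_partition u k s t \<Longrightarrow> (\<Sum>i<k. norm (R (u i) (u (Suc i))) powr q) \<le> B"
  shows "finite_qvar2 R q s t \<and> qvar2 R q s t \<le> B powr (1 / q)"
proof
  have le: "x \<le> B" if "x \<in> qvar2_sums R q s t" for x
    using that sums unfolding qvar2_sums_def by blast
  then show fin: "finite_qvar2 R q s t"
    unfolding finite_qvar2_def bdd_above_def by blast
  have "Sup (qvar2_sums R q s t) \<le> B"
    using le qvar2_sums_nonempty[OF assms(1)] by (intro cSup_least) auto
  then show "qvar2 R q s t \<le> B powr (1 / q)"
    unfolding qvar2_def using assms Sup_qvar2_sums_nonneg[OF assms(1) fin] by (intro powr_mono2) auto
qed

lemma qvar2_le_holder:
  fixes R :: "real \<Rightarrow> real \<Rightarrow> 'a::real_normed_vector"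
  assumes "s < t" "0 < q" "1 \<le> q * \<beta>" "0 \<le> c"
    and holder: "\<And>a b. s \<le> a \<Longrightarrow> a < b \<Longrightarrow> b \<le> t \<Longrightarrow> norm (R a b) \<le> c * (b - a) powr \<beta>"
  shows "finite_qvar2 R q s t \<and> qvar2 R q s t \<le> c * (t - s) powr \<beta>"
proof -
  have "(\<Sum>i<k. norm (R (u i) (u (Suc i))) powr q) \<le> c powr q * (t - s) powr (\<beta> * q)"
    if u: "is_partition u k s t" for u k
  proof -
    have "(\<Sum>i<k. norm (R (u i) (u (Suc i))) powr q) \<le> (\<Sum>i<k. c powr q * (u (Suc i) - u i) powr (\<beta> * q))"
    proof (rule sum_mono)
      fix i assume "i \<in> {..<k}"
      then have i: "s \<le> u i" "u i < u (Suc i)" "u (Suc i) \<le> t"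
        using is_partition_subinterval[OF u] by auto
      have "norm (R (u i) (u (Suc i))) powr q \<le> (c * (u (Suc i) - u i) powr \<beta>) powr q"
        using holder[OF i] assms(2) by (intro powr_mono2) auto
      also have "\<dots> = c powr q * (u (Suc i) - u i) powr (\<beta> * q)"
        using assms(4) i by (simp add: powr_mult powr_powr)
      finally show "norm (R (u i) (u (Suc i))) powr q \<le> c powr q * (u (Suc i) - u i) powr (\<beta> * q)" .
    qed
    also have "\<dots> \<le> c powr q * (\<Sum>i<k. u (Suc i) - u i) powr (\<beta> * q)"
      unfolding sum_distrib_left[symmetric] using is_partition_subinterval[OF u] assms(3)
      by (intro mult_left_mono sum_powr_le_powr_sum) (auto simp: less_imp_le mult.commute)
    finally show ?thesis
      unfolding is_partition_telescope[OF u] .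
  qed
  moreover have "(c powr q * (t - s) powr (\<beta> * q)) powr (1 / q) = c * (t - s) powr \<beta>"
    using assms by (simp add: powr_mult powr_powr)
  ultimately show ?thesis
    using qvar2_le_if_sums_le[OF assms(1,2)] by metis
qed

lemma qvar2_le_pointwise:
  fixes R :: "real \<Rightarrow> real \<Rightarrow> 'a::real_normed_vector"
    and R1 :: "real \<Rightarrow> real \<Rightarrow> 'b::real_normed_vector"
    and R2 :: "real \<Rightarrow> real \<Rightarrow> 'c::real_normed_vector"
  assumes "a \<le> s" "s < t" "t \<le> b" "0 < q" "0 < q1" "0 < q2" "0 \<le> K1" "0 \<le> K2"
    and fin: "finite_qvar2 R1 q1 a b" "finite_qvar2 R2 q2 a b"
    and pointwise: "\<And>x y. s \<le> x \<Longrightarrow> x < y \<Longrightarrow> y \<le> t \<Longrightarrow>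
      norm (R x y) powr q \<le> K1 * norm (R1 x y) powr q1 + K2 * norm (R2 x y) powr q2"
  shows "finite_qvar2 R q s t \<and>
    qvar2 R q s t \<le> (K1 * qvar2 R1 q1 a b powr q1 + K2 * qvar2 R2 q2 a b powr q2) powr (1 / q)"
proof (rule qvar2_le_if_sums_le[OF assms(2,4)])
  fix u k assume u: "is_partition u k s t"
  have "(\<Sum>i<k. norm (R (u i) (u (Suc i))) powr q)
      \<le> (\<Sum>i<k. K1 * norm (R1 (u i) (u (Suc i))) powr q1 + K2 * norm (R2 (u i) (u (Suc i))) powr q2)"
    using is_partition_subinterval[OF u] by (intro sum_mono pointwise) auto
  also have "\<dots> = K1 * (\<Sum>i<k. norm (R1 (u i) (u (Suc i))) powr q1)
      + K2 * (\<Sum>i<k. norm (R2 (u i) (u (Suc i))) powr q2)"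
    by (simp add: sum.distrib sum_distrib_left)
  also have "\<dots> \<le> K1 * Sup (qvar2_sums R1 q1 a b) + K2 * Sup (qvar2_sums R2 q2 a b)"
    using qvar2_sum_le_Sup[OF u assms(1,3) fin(1)] qvar2_sum_le_Sup[OF u assms(1,3) fin(2)] assms(7,8)
    by (intro add_mono mult_left_mono) auto
  also have "\<dots> = K1 * qvar2 R1 q1 a b powr q1 + K2 * qvar2 R2 q2 a b powr q2"
    using assms qvar2_powr_eq_Sup[of a b R1] qvar2_powr_eq_Sup[of a b R2] by simp
  finally show "(\<Sum>i<k. norm (R (u i) (u (Suc i))) powr q)
      \<le> K1 * qvar2 R1 q1 a b powr q1 + K2 * qvar2 R2 q2 a b powr q2" .
qed

lemma pvar_le_lipschitz_image:
  fixes x :: "real \<Rightarrow> 'a::real_normed_vector" and y :: "real \<Rightarrow> 'b::real_normed_vector"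
  assumes "a \<le> s" "s < t" "t \<le> b" "0 < p" "0 \<le> L" "finite_pvar x p a b"
    and lipschitz: "\<And>u v. s \<le> u \<Longrightarrow> u < v \<Longrightarrow> v \<le> t \<Longrightarrow> norm (y v - y u) \<le> L * norm (x v - x u)"
  shows "finite_pvar y p s t \<and> pvar y p s t \<le> L * pvar x p a b"
proof -
  have "finite_pvar y p s t \<and>
      pvar y p s t \<le> (L powr p * pvar x p a b powr p + 0 * pvar x p a b powr p) powr (1 / p)"
    unfolding pvar_eq_qvar2_increments
  proof (rule qvar2_le_pointwise)
    fix u v assume "s \<le> u" "u < v" "v \<le> t"
    then have "norm (y v - y u) powr p \<le> (L * norm (x v - x u)) powr p"
      using lipschitz assms(4) by (intro powr_mono2) auto
    then show "norm (y v - y u) powr p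
        \<le> L powr p * norm (x v - x u) powr p + 0 * norm (x v - x u) powr p"
      using assms(5) by (simp add: powr_mult)
  qed (use assms in \<open>auto simp: pvar_eq_qvar2_increments\<close>)
  moreover have "0 \<le> pvar x p a b"
    by (simp add: pvar_def)
  then have "(L powr p * pvar x p a b powr p) powr (1 / p) = L * pvar x p a b"
    using assms(4,5) by (simp add: powr_mult powr_powr)
  ultimately show ?thesis by simp
qed

lemma supnorm_nonneg:
  fixes x :: "real \<Rightarrow> 'a::real_normed_vector"
  assumes "continuous_on {a..b} x" "a \<le> b"
  shows "0 \<le> supnorm x a b"
proof -
  have "bounded (x ` {a..b})"
    using assms by (intro compact_imp_bounded compact_continuous_image) auto
  then have "bdd_above ((\<lambda>t. norm (x t)) ` {a..b})"
    by (auto simp: bounded_iff bdd_above_def)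
  then have "norm (x a) \<le> supnorm x a b"
    unfolding supnorm_def using assms(2) by (intro cSup_upper) auto
  then show ?thesis
    using norm_ge_zero order_trans by blast
qed

section \<open>Hoelder rough paths and the rough integral\<close>

lemma holder1_set_eq_holder2_set:
  "holder1_set w \<gamma> a b = holder2_set (\<lambda>s t. w t - w s) (\<gamma> / 2) a b"
  by (simp add: holder1_set_def holder2_set_def)

lemma norm_le_Sup_holder2_set:
  assumes "bdd_above (holder2_set W \<gamma> a b)" "a \<le> s" "s < t" "t \<le> b"
  shows "norm (W s t) \<le> Sup (holder2_set W \<gamma> a b) * (t - s) powr (2 * \<gamma>)"
proof -
  have "norm (W s t) / (t - s) powr (2 * \<gamma>) \<in> holder2_set W \<gamma> a b"
    unfolding holder2_set_def using assms by blast
  then have "norm (W s t) / (t - s) powr (2 * \<gamma>) \<le> Sup (holder2_set W \<gamma> a b)"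
    using assms(1) by (rule cSup_upper)
  then show ?thesis
    using assms by (simp add: divide_le_eq)
qed

lemma Sup_holder2_set_nonneg:
  assumes "bdd_above (holder2_set W \<gamma> a b)" "a < b"
  shows "0 \<le> Sup (holder2_set W \<gamma> a b)"
proof -
  have "norm (W a b) / (b - a) powr (2 * \<gamma>) \<in> holder2_set W \<gamma> a b"
    unfolding holder2_set_def using assms by blast
  then show ?thesis
    using assms(1) by (meson cSup_upper divide_nonneg_nonneg norm_ge_zero powr_ge_zero order_trans)
qed

lemma rp_holder_norm_nonneg:
  assumes "bdd_above (holder1_set w \<gamma> a b)" "bdd_above (holder2_set W \<gamma> a b)" "a < b"
  shows "0 \<le> rp_holder_norm w W \<gamma> a b"
  using Sup_holder2_set_nonneg[OF assms(1)[unfolded holder1_set_eq_holder2_set] assms(3)]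
    Sup_holder2_set_nonneg[OF assms(2,3)]
  by (simp add: rp_holder_norm_def holder1_set_eq_holder2_set)

lemma rp_holder_norm_increment_le:
  assumes bdd: "bdd_above (holder1_set w \<gamma> a b)" "bdd_above (holder2_set W \<gamma> a b)"
    and "a \<le> s" "s < t" "t \<le> b"
  shows "norm (w t - w s) \<le> rp_holder_norm w W \<gamma> a b * (t - s) powr \<gamma>"
    and "norm (W s t) \<le> rp_holder_norm w W \<gamma> a b ^ 2 * (t - s) powr (2 * \<gamma>)"
proof -
  define N1 where "N1 = Sup (holder1_set w \<gamma> a b)"
  define N2 where "N2 = Sup (holder2_set W \<gamma> a b)"
  have "a < b" using assms by linarith
  have N1: "0 \<le> N1"
    unfolding N1_def holder1_set_eq_holder2_set
    using Sup_holder2_set_nonneg[OF bdd(1)[unfolded holder1_set_eq_holder2_set] \<open>a < b\<close>] .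
  have N2: "0 \<le> N2"
    unfolding N2_def using Sup_holder2_set_nonneg[OF bdd(2) \<open>a < b\<close>] .
  have n: "rp_holder_norm w W \<gamma> a b = N1 + sqrt N2"
    by (simp add: rp_holder_norm_def N1_def N2_def)
  have "norm (w t - w s) \<le> N1 * (t - s) powr \<gamma>"
    using norm_le_Sup_holder2_set[OF bdd(1)[unfolded holder1_set_eq_holder2_set] assms(3-5)]
    by (simp add: N1_def holder1_set_eq_holder2_set)
  also have "\<dots> \<le> rp_holder_norm w W \<gamma> a b * (t - s) powr \<gamma>"
    unfolding n using N2 by (intro mult_right_mono) auto
  finally show "norm (w t - w s) \<le> rp_holder_norm w W \<gamma> a b * (t - s) powr \<gamma>" .
  have "N2 = (sqrt N2)\<^sup>2"
    using N2 by simp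
  also have "\<dots> \<le> rp_holder_norm w W \<gamma> a b ^ 2"
    unfolding n using N1 N2 by (intro power_mono) auto
  finally have "N2 \<le> rp_holder_norm w W \<gamma> a b ^ 2" .
  then show "norm (W s t) \<le> rp_holder_norm w W \<gamma> a b ^ 2 * (t - s) powr (2 * \<gamma>)"
    using norm_le_Sup_holder2_set[OF bdd(2) assms(3-5)] unfolding N2_def
    by (meson mult_right_mono order_trans powr_ge_zero)
qed

lemma rough_path_variation_le:
  assumes bdd: "bdd_above (holder1_set w \<gamma> a b)" "bdd_above (holder2_set W \<gamma> a b)"
    and "a \<le> s" "s < t" "t \<le> b" "0 < p" "1 \<le> p * \<gamma>"
  shows "finite_pvar w p s t \<and> pvar w p s t \<le> rp_holder_norm w W \<gamma> a b * (t - s) powr \<gamma>"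
    and "qvar2 W (p / 2) s t \<le> (rp_holder_norm w W \<gamma> a b)\<^sup>2 * (t - s) powr (2 * \<gamma>)"
proof -
  have n: "0 \<le> rp_holder_norm w W \<gamma> a b"
    using rp_holder_norm_nonneg[OF bdd] assms by simp
  show "finite_pvar w p s t \<and> pvar w p s t \<le> rp_holder_norm w W \<gamma> a b * (t - s) powr \<gamma>"
    unfolding pvar_eq_qvar2_increments using assms n
    by (intro qvar2_le_holder rp_holder_norm_increment_le(1)[OF bdd]) auto
  show "qvar2 W (p / 2) s t \<le> (rp_holder_norm w W \<gamma> a b)\<^sup>2 * (t - s) powr (2 * \<gamma>)"
    using assms by (intro qvar2_le_holder[THEN conjunct2] rp_holder_norm_increment_le(2)[OF bdd]) auto
qed

lemma has_rough_integral_trivial: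
  assumes "has_rough_integral w W y y' a a I"
  shows "I = 0"
proof (rule ccontr)
  assume "I \<noteq> 0"
  then obtain \<delta> where "\<forall>u k. is_partition u k a a \<and> (\<forall>i<k. u (Suc i) - u i < \<delta>) \<longrightarrow>
      norm ((\<Sum>i<k. y (u i) *v (w (u (Suc i)) - w (u i))
        + second_order_term (y' (u i)) (W (u i) (u (Suc i)))) - I) < norm I"
    using assms unfolding has_rough_integral_def by (meson zero_less_norm_iff)
  moreover have "is_partition (\<lambda>_. a) 0 a a"
    by (simp add: is_partition_def)
  ultimately have "norm (0 - I) < norm I"
    by fastforce
  then show False by simp
qed

lemma has_rough_integral_diff:
  assumes "a \<le> s" "s < t"
    and It: "has_rough_integral w W y y' a t It"
    and Is: "has_rough_integral w W y y' a s Is"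
  shows "has_rough_integral w W y y' s t (It - Is)"
proof (cases "a = s")
  case True
  then show ?thesis using It has_rough_integral_trivial[OF Is[folded True]] by simp
next
  case False
  then have as: "a < s" using assms(1) by simp
  define G where "G u v = y u *v (w v - w u) + second_order_term (y' u) (W u v)" for u v
  show ?thesis
    unfolding has_rough_integral_def G_def[symmetric]
  proof (intro allI impI)
    fix e :: real assume "e > 0"
    then have "e / 2 > 0" by simp
    then obtain d1 where "d1 > 0"
      and d1: "\<And>u k. is_partition u k a t \<and> (\<forall>i<k. u (Suc i) - u i < d1) \<Longrightarrow>
        norm ((\<Sum>i<k. G (u i) (u (Suc i))) - It) < e / 2"
      using It unfolding has_rough_integral_def G_def by blast
    obtain d2 where "d2 > 0"
      and d2: "\<And>u k. is_partition u k a s \<and> (\<forall>i<k. u (Suc i) - u i < d2) \<Longrightarrow>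
        norm ((\<Sum>i<k. G (u i) (u (Suc i))) - Is) < e / 2"
      using Is \<open>e / 2 > 0\<close> unfolding has_rough_integral_def G_def by blast
    define d where "d = min d1 d2"
    \<comment> \<open>Prepending a fine partition of [a,s] to a fine partition of [s,t] gives a fine
      partition of [a,t] whose compensated Riemann sum is the sum of the two.\<close>
    obtain v m where v: "is_partition v m a s" and vd: "\<forall>i<m. v (Suc i) - v i < d"
      using fine_partition_exists[OF as, of d] \<open>d1 > 0\<close> \<open>d2 > 0\<close> by (auto simp: d_def)
    show "\<exists>\<delta>>0. \<forall>u k. is_partition u k s t \<and> (\<forall>i<k. u (Suc i) - u i < \<delta>) \<longrightarrow>
        norm ((\<Sum>i<k. G (u i) (u (Suc i))) - (It - Is)) < e"
    proof (intro exI[of _ d] conjI allI impI)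
      show "0 < d" using \<open>d1 > 0\<close> \<open>d2 > 0\<close> by (simp add: d_def)
      fix u k assume u: "is_partition u k s t \<and> (\<forall>i<k. u (Suc i) - u i < d)"
      have vu: "v m = u 0" using u v by (simp add: is_partition_def)
      have mesh: "\<forall>i<m + k. join_partition v m u (Suc i) - join_partition v m u i < d1"
        using vd u by (intro join_partition_steps[of v m u, OF vu]) (auto simp: d_def)
      have "norm ((\<Sum>i<m + k. G (join_partition v m u i) (join_partition v m u (Suc i))) - It) < e / 2"
        using d1 is_partition_join[OF v] mesh u by blast
      moreover have "norm ((\<Sum>i<m. G (v i) (v (Suc i))) - Is) < e / 2"
        using d2 v vd by (simp add: d_def)
      ultimately show "norm ((\<Sum>i<k. G (u i) (u (Suc i))) - (It - Is)) < e"
        unfolding sum_join_partition[of v m u, OF vu]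
        using norm_triangle_ineq4[of "(\<Sum>i<m. G (v i) (v (Suc i))) + (\<Sum>i<k. G (u i) (u (Suc i))) - It"
            "(\<Sum>i<m. G (v i) (v (Suc i))) - Is"]
        by (simp add: algebra_simps)
    qed
  qed
qed

lemma norm_second_order_term_le:
  fixes A :: "(real^'d) \<Rightarrow>\<^sub>L (real^'d^'n)" and V :: "real^'d^'d"
  shows "norm (second_order_term A V) \<le>
    real CARD('d) * real CARD('d) * (real CARD('n) * real CARD('d) * norm A * norm V)"
proof -
  have "norm (second_order_term A V)
      \<le> (\<Sum>i\<in>UNIV. \<Sum>j\<in>UNIV. norm (V $ i $ j *\<^sub>R (blinfun_apply A (axis i 1) *v axis j 1)))"
    unfolding second_order_term_def by (rule order_trans[OF norm_sum sum_mono[OF norm_sum]])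
  also have "\<dots> \<le> (\<Sum>i\<in>(UNIV::'d set). \<Sum>j\<in>(UNIV::'d set).
      real CARD('n) * real CARD('d) * norm A * norm V)"
  proof (intro sum_mono)
    fix i j :: 'd
    have "\<bar>V $ i $ j\<bar> \<le> norm V"
      using component_le_norm_cart[of "V $ i" j] Finite_Cartesian_Product.norm_nth_le[of V i] by simp
    moreover have "norm (blinfun_apply A (axis i 1) *v axis j 1)
        \<le> real CARD('n) * real CARD('d) * norm (blinfun_apply A (axis i 1)) * norm (axis j (1::real))"
      by (rule norm_matrix_vector_mult_le)
    then have "norm (blinfun_apply A (axis i 1) *v axis j 1) \<le> real CARD('n) * real CARD('d) * norm A"
      using norm_blinfun[of A "axis i 1"] by (simp add: mult_left_mono order_trans)
    ultimately show "norm (V $ i $ j *\<^sub>R (blinfun_apply A (axis i 1) *v axis j 1))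
        \<le> real CARD('n) * real CARD('d) * norm A * norm V"
      by (simp add: mult_mono mult.commute mult.left_commute)
  qed
  finally show ?thesis by simp
qed

section \<open>Coefficients of class C_b^3\<close>

lemma gub_deriv_apply:
  "blinfun_apply (gub_deriv h Dh x) v = blinfun_apply (Dh x) (h x *v v)"
proof -
  have "bounded_linear (\<lambda>v. blinfun_apply (Dh x) (h x *v v))"
    by (rule bounded_linear_compose[OF blinfun.bounded_linear_right matrix_vector_mul_bounded_linear])
  then show ?thesis
    unfolding gub_deriv_def by (simp add: bounded_linear_Blinfun_apply)
qed

context
  fixes h :: "real^'n \<Rightarrow> real^'d^'n" and Dh D2h D3h
  assumes Cb3: "Cb3_with h Dh D2h D3h"
begin

lemma Cb3_norm_le: "norm (h x) \<le> C_h_const h Dh D2h D3h"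
  using bounded_norm_le_SUP_norm[of h x] Cb3 unfolding Cb3_with_def C_h_const_def by linarith

lemma Cb3_deriv_norm_le: "norm (Dh x) \<le> C_h_const h Dh D2h D3h"
  using bounded_norm_le_SUP_norm[of Dh x] Cb3 unfolding Cb3_with_def C_h_const_def by linarith

lemma Cb3_second_deriv_norm_le: "norm (D2h x) \<le> C_h_const h Dh D2h D3h"
  using bounded_norm_le_SUP_norm[of D2h x] Cb3 unfolding Cb3_with_def C_h_const_def by linarith

lemma Cb3_const_nonneg: "0 \<le> C_h_const h Dh D2h D3h"
  using Cb3_norm_le[of 0] norm_ge_zero order_trans by blast

lemma Cb3_lipschitz: "norm (h x - h y) \<le> C_h_const h Dh D2h D3h * norm (x - y)"
proof (rule differentiable_bound[where S = UNIV and f' = "\<lambda>x. blinfun_apply (Dh x)"])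
  show "\<And>x. (h has_derivative blinfun_apply (Dh x)) (at x within UNIV)"
    using Cb3 unfolding Cb3_with_def by auto
  show "\<And>x. onorm (blinfun_apply (Dh x)) \<le> C_h_const h Dh D2h D3h"
    using Cb3_deriv_norm_le by (simp add: norm_blinfun.rep_eq[symmetric])
qed auto

lemma Cb3_deriv_lipschitz: "norm (Dh x - Dh y) \<le> C_h_const h Dh D2h D3h * norm (x - y)"
proof (rule differentiable_bound[where S = UNIV and f' = "\<lambda>x. blinfun_apply (D2h x)"])
  show "\<And>x. (Dh has_derivative blinfun_apply (D2h x)) (at x within UNIV)"
    using Cb3 unfolding Cb3_with_def by auto
  show "\<And>x. onorm (blinfun_apply (D2h x)) \<le> C_h_const h Dh D2h D3h"
    using Cb3_second_deriv_norm_le by (simp add: norm_blinfun.rep_eq[symmetric])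
qed auto

lemma Cb3_taylor_le:
  "norm (h b - h a - blinfun_apply (Dh a) (b - a)) \<le> C_h_const h Dh D2h D3h * norm (b - a)^2"
proof -
  have "norm (h b - h a - blinfun_apply (Dh a) (b - a)) \<le> norm (b - a) * (C_h_const h Dh D2h D3h * norm (b - a))"
  proof (rule differentiable_bound_linearization[where S = "closed_segment a b" and f' = "\<lambda>x. blinfun_apply (Dh x)"])
    show "\<And>t. t \<in> {0..1} \<Longrightarrow> a + t *\<^sub>R (b - a) \<in> closed_segment a b"
      unfolding in_segment by (rule_tac x=t in exI) (auto simp: algebra_simps)
    show "\<And>x. (h has_derivative blinfun_apply (Dh x)) (at x within closed_segment a b)"
      using Cb3 unfolding Cb3_with_def by (auto intro: has_derivative_at_withinI)
    fix x assume x: "x \<in> closed_segment a b"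
    have "onorm (blinfun_apply (Dh x) - blinfun_apply (Dh a)) = norm (Dh x - Dh a)"
      by (simp add: norm_blinfun.rep_eq fun_diff_def minus_blinfun.rep_eq)
    also have "\<dots> \<le> C_h_const h Dh D2h D3h * norm (x - a)"
      by (rule Cb3_deriv_lipschitz)
    also have "\<dots> \<le> C_h_const h Dh D2h D3h * norm (b - a)"
      using dist_in_closed_segment[OF x] Cb3_const_nonneg
      by (intro mult_left_mono) (auto simp: dist_norm norm_minus_commute)
    finally show "onorm (blinfun_apply (Dh x) - blinfun_apply (Dh a)) \<le> C_h_const h Dh D2h D3h * norm (b - a)" .
  qed auto
  then show ?thesis by (simp add: power2_eq_square mult_ac)
qed

lemma norm_gub_deriv_le:
  "norm (gub_deriv h Dh x) \<le>
    C_h_const h Dh D2h D3h * (real CARD('n) * real CARD('d) * C_h_const h Dh D2h D3h)"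
proof (rule norm_blinfun_bound)
  define Ch where "Ch = C_h_const h Dh D2h D3h"
  show "0 \<le> C_h_const h Dh D2h D3h * (real CARD('n) * real CARD('d) * C_h_const h Dh D2h D3h)"
    using Cb3_const_nonneg by simp
  fix v
  have "norm (h x *v v) \<le> real CARD('n) * real CARD('d) * norm (h x) * norm v"
    by (rule norm_matrix_vector_mult_le)
  also have "\<dots> \<le> real CARD('n) * real CARD('d) * Ch * norm v"
    unfolding Ch_def by (intro mult_right_mono mult_left_mono Cb3_norm_le) auto
  finally have "norm (blinfun_apply (Dh x) (h x *v v)) \<le> Ch * (real CARD('n) * real CARD('d) * Ch * norm v)"
    using norm_blinfun[of "Dh x" "h x *v v"] Cb3_deriv_norm_le[of x] Cb3_const_nonneg
    unfolding Ch_def by (meson mult_mono norm_ge_zero order_trans)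
  then show "norm (blinfun_apply (gub_deriv h Dh x) v) \<le>
      C_h_const h Dh D2h D3h * (real CARD('n) * real CARD('d) * C_h_const h Dh D2h D3h) * norm v"
    by (simp add: gub_deriv_apply Ch_def mult_ac)
qed

lemma gub_deriv_lipschitz:
  "norm (gub_deriv h Dh x - gub_deriv h Dh y) \<le>
    2 * C_h_const h Dh D2h D3h * (real CARD('n) * real CARD('d) * C_h_const h Dh D2h D3h) * norm (x - y)"
proof (rule norm_blinfun_bound)
  define Ch where "Ch = C_h_const h Dh D2h D3h"
  define M where "M = real CARD('n) * real CARD('d)"
  have Ch: "0 \<le> Ch" and M: "0 \<le> M"
    using Cb3_const_nonneg by (simp_all add: Ch_def M_def)
  show "0 \<le> 2 * C_h_const h Dh D2h D3h * (real CARD('n) * real CARD('d) * C_h_const h Dh D2h D3h) * norm (x - y)"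
    using Ch by (simp add: Ch_def)
  fix v
  have mv: "norm (A *v v) \<le> M * norm A * norm v" for A :: "real^'d^'n"
    unfolding M_def by (rule norm_matrix_vector_mult_le)
  have "blinfun_apply (gub_deriv h Dh x - gub_deriv h Dh y) v =
      blinfun_apply (Dh x - Dh y) (h x *v v) + blinfun_apply (Dh y) ((h x - h y) *v v)"
    by (simp add: gub_deriv_apply blinfun.diff_left blinfun.diff_right matrix_vector_mult_diff_rdistrib)
  then have "norm (blinfun_apply (gub_deriv h Dh x - gub_deriv h Dh y) v) \<le>
      norm (blinfun_apply (Dh x - Dh y) (h x *v v)) + norm (blinfun_apply (Dh y) ((h x - h y) *v v))"
    by (simp add: norm_triangle_ineq)
  also have "\<dots> \<le> (Ch * norm (x - y)) * (M * Ch * norm v) + Ch * (M * (Ch * norm (x - y)) * norm v)"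
  proof (intro add_mono order_trans[OF norm_blinfun] mult_mono)
    show "norm (Dh x - Dh y) \<le> Ch * norm (x - y)" unfolding Ch_def by (rule Cb3_deriv_lipschitz)
    show "norm (Dh y) \<le> Ch" unfolding Ch_def by (rule Cb3_deriv_norm_le)
    show "norm (h x *v v) \<le> M * Ch * norm v"
      using mv[of "h x"] Cb3_norm_le[of x] M unfolding Ch_def
      by (meson mult_left_mono mult_right_mono norm_ge_zero order_trans)
    show "norm ((h x - h y) *v v) \<le> M * (Ch * norm (x - y)) * norm v"
      using mv[of "h x - h y"] Cb3_lipschitz[of x y] M unfolding Ch_def
      by (meson mult_left_mono mult_right_mono norm_ge_zero order_trans)
  qed (use Ch M in auto)
  also have "\<dots> = 2 * Ch * (M * Ch) * norm (x - y) * norm v"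
    by (simp add: algebra_simps)
  finally show "norm (blinfun_apply (gub_deriv h Dh x - gub_deriv h Dh y) v) \<le>
      2 * C_h_const h Dh D2h D3h * (real CARD('n) * real CARD('d) * C_h_const h Dh D2h D3h) * norm (x - y) * norm v"
    unfolding Ch_def M_def .
qed

lemma norm_ctrl_remainder_comp_le:
  fixes w :: "real \<Rightarrow> real^'d" and X :: "real \<Rightarrow> real^'n"
  shows "norm (ctrl_remainder w (\<lambda>r. h (X r)) (\<lambda>r. gub_deriv h Dh (X r)) a b)
    \<le> C_h_const h Dh D2h D3h * norm (X b - X a)^2 + C_h_const h Dh D2h D3h * norm (sol_remainder w h X a b)"
proof -
  have "ctrl_remainder w (\<lambda>r. h (X r)) (\<lambda>r. gub_deriv h Dh (X r)) a b
      = (h (X b) - h (X a) - blinfun_apply (Dh (X a)) (X b - X a))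
        + blinfun_apply (Dh (X a)) (sol_remainder w h X a b)"
    unfolding ctrl_remainder_def sol_remainder_def
    by (simp add: gub_deriv_apply blinfun.diff_right matrix_vector_mult_diff_distrib)
  also have "norm \<dots> \<le> norm (h (X b) - h (X a) - blinfun_apply (Dh (X a)) (X b - X a))
      + norm (blinfun_apply (Dh (X a)) (sol_remainder w h X a b))"
    by (rule norm_triangle_ineq)
  also have "\<dots> \<le> C_h_const h Dh D2h D3h * norm (X b - X a)^2
      + C_h_const h Dh D2h D3h * norm (sol_remainder w h X a b)"
    using Cb3_taylor_le norm_blinfun[of "Dh (X a)"] Cb3_deriv_norm_le[of "X a"]
    by (meson add_mono mult_right_mono norm_ge_zero order_trans)
  finally show ?thesis .
qed

lemma pvar_gub_deriv_comp_le:
  fixes X :: "real \<Rightarrow> real^'n"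
  assumes "a \<le> s" "s < t" "t \<le> b" "0 < p" "finite_pvar X p a b"
  shows "finite_pvar (\<lambda>r. gub_deriv h Dh (X r)) p s t \<and>
    pvar (\<lambda>r. gub_deriv h Dh (X r)) p s t
      \<le> 2 * C_h_const h Dh D2h D3h * (real CARD('n) * real CARD('d) * C_h_const h Dh D2h D3h) * pvar X p a b"
  using assms Cb3_const_nonneg gub_deriv_lipschitz
  by (intro pvar_le_lipschitz_image) auto

lemma qvar2_ctrl_remainder_comp_le:
  fixes w :: "real \<Rightarrow> real^'d" and X :: "real \<Rightarrow> real^'n"
  assumes "a \<le> s" "s < t" "t \<le> b" "0 < p" "q = p / 2"
    and "finite_pvar X p a b" "finite_qvar2 (sol_remainder w h X) q a b"
  defines "K \<equiv> 2 powr q * C_h_const h Dh D2h D3h powr q"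
  shows "finite_qvar2 (ctrl_remainder w (\<lambda>r. h (X r)) (\<lambda>r. gub_deriv h Dh (X r))) q s t \<and>
    qvar2 (ctrl_remainder w (\<lambda>r. h (X r)) (\<lambda>r. gub_deriv h Dh (X r))) q s t
      \<le> (K * pvar X p a b powr p + K * qvar2 (sol_remainder w h X) q a b powr q) powr (1 / q)"
  unfolding pvar_eq_qvar2_increments
proof (rule qvar2_le_pointwise)
  define Ch where "Ch = C_h_const h Dh D2h D3h"
  have Ch: "0 \<le> Ch" using Cb3_const_nonneg by (simp add: Ch_def)
  fix u v
  have "(norm (X v - X u)^2) powr q = (norm (X v - X u) powr 2) powr q"
    by simp
  also have "\<dots> = norm (X v - X u) powr p"
    unfolding powr_powr using assms(5) by (simp add: mult.commute)
  finally have sq: "(norm (X v - X u)^2) powr q = norm (X v - X u) powr p" .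
  have "norm (ctrl_remainder w (\<lambda>r. h (X r)) (\<lambda>r. gub_deriv h Dh (X r)) u v) powr q
      \<le> (Ch * norm (X v - X u)^2 + Ch * norm (sol_remainder w h X u v)) powr q"
    using norm_ctrl_remainder_comp_le assms(4,5) unfolding Ch_def by (intro powr_mono2) auto
  also have "\<dots> \<le> 2 powr q * ((Ch * norm (X v - X u)^2) powr q + (Ch * norm (sol_remainder w h X u v)) powr q)"
    using Ch assms(4,5) by (intro powr_add_le_two_powr) auto
  also have "\<dots> = K * norm (X v - X u) powr p + K * norm (sol_remainder w h X u v) powr q"
    using Ch sq unfolding K_def Ch_def by (simp add: powr_mult algebra_simps)
  finally show "norm (ctrl_remainder w (\<lambda>r. h (X r)) (\<lambda>r. gub_deriv h Dh (X r)) u v) powr q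
      \<le> K * norm (X v - X u) powr p + K * norm (sol_remainder w h X u v) powr q" .
qed (use assms in \<open>auto simp: pvar_eq_qvar2_increments\<close>)

lemma rough_expansion_terms_le:
  fixes w :: "real \<Rightarrow> real^'d"
  assumes bdd: "bdd_above (holder1_set w \<gamma> a b)" "bdd_above (holder2_set W \<gamma> a b)"
    and st: "a \<le> s" "s < t" "t \<le> b"
  defines "M \<equiv> real CARD('n) * real CARD('d)" and "Ch \<equiv> C_h_const h Dh D2h D3h"
    and "n \<equiv> rp_holder_norm w W \<gamma> a b"
  shows "norm (h x *v (w t - w s)) \<le> M * Ch * n * (t - s) powr \<gamma>"
    and "norm (second_order_term (gub_deriv h Dh x) (W s t))
      \<le> real CARD('d) * real CARD('d) * (M * (Ch * (M * Ch))) * n\<^sup>2 * (t - s) powr (2 * \<gamma>)"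
proof -
  have nonneg: "0 \<le> M" "0 \<le> Ch" "0 \<le> n"
    using Cb3_const_nonneg rp_holder_norm_nonneg[OF bdd] st by (auto simp: M_def Ch_def n_def)
  have "norm (h x *v (w t - w s)) \<le> M * norm (h x) * norm (w t - w s)"
    unfolding M_def by (rule norm_matrix_vector_mult_le)
  also have "\<dots> \<le> M * Ch * (n * (t - s) powr \<gamma>)"
    using Cb3_norm_le rp_holder_norm_increment_le(1)[OF bdd st] nonneg
    unfolding Ch_def n_def by (intro mult_mono mult_left_mono) auto
  finally show "norm (h x *v (w t - w s)) \<le> M * Ch * n * (t - s) powr \<gamma>"
    by (simp add: mult.assoc)
  have "norm (second_order_term (gub_deriv h Dh x) (W s t))
      \<le> real CARD('d) * real CARD('d) * (M * norm (gub_deriv h Dh x) * norm (W s t))"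
    unfolding M_def by (rule norm_second_order_term_le)
  also have "\<dots> \<le> real CARD('d) * real CARD('d) * (M * (Ch * (M * Ch)) * (n\<^sup>2 * (t - s) powr (2 * \<gamma>)))"
    using norm_gub_deriv_le rp_holder_norm_increment_le(2)[OF bdd st] nonneg
    unfolding Ch_def n_def M_def by (intro mult_left_mono mult_mono) auto
  finally show "norm (second_order_term (gub_deriv h Dh x) (W s t))
      \<le> real CARD('d) * real CARD('d) * (M * (Ch * (M * Ch))) * n\<^sup>2 * (t - s) powr (2 * \<gamma>)"
    by (simp add: mult.assoc)
qed

end

section \<open>Hoelder bound for the slow component\<close>

lemma solves_slow_fast_rough_increment:
  assumes sol: "solves_slow_fast T w W w2 f h Dh g X0 Y0 \<epsilon> X Y"
    and "0 \<le> s" "s < t" "t \<le> T"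
  shows "(\<lambda>r. f (X r) (Y r)) integrable_on {s..t}"
    and "has_rough_integral w W (\<lambda>r. h (X r)) (\<lambda>r. gub_deriv h Dh (X r)) s t
           (X t - X s - integral {s..t} (\<lambda>r. f (X r) (Y r)))"
proof -
  define F where "F r = f (X r) (Y r)" for r
  have eq: "F integrable_on {0..r} \<and> has_rough_integral w W (\<lambda>r. h (X r)) (\<lambda>r. gub_deriv h Dh (X r))
      0 r (X r - X0 - integral {0..r} F)" if "0 \<le> r" "r \<le> T" for r
    using sol that unfolding solves_slow_fast_def F_def by auto
  then have "F integrable_on {0..t}"
    using assms by auto
  then show "F integrable_on {s..t}"
    by (rule integrable_on_subinterval) (use assms in auto)
  have "integral {0..s} F + integral {s..t} F = integral {0..t} F"
    using \<open>F integrable_on {0..t}\<close> assms by (intro Henstock_Kurzweil_Integration.integral_combine) auto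
  then have split: "X t - X s - integral {s..t} F
      = (X t - X0 - integral {0..t} F) - (X s - X0 - integral {0..s} F)"
    by (simp add: algebra_simps)
  show "has_rough_integral w W (\<lambda>r. h (X r)) (\<lambda>r. gub_deriv h Dh (X r)) s t
      (X t - X s - integral {s..t} F)"
    unfolding split by (rule has_rough_integral_diff) (use assms eq in auto)
qed

text \<open>The three summands bound the drift, the first-order term h(X s)(w t - w s) with the
  sewing error against w, and the second-order term with the sewing error against W; the powers
  of T convert (t - s) and (t - s) powr 2\<gamma> into (t - s) powr \<gamma>.\<close>

definition slow_holder_const ::
  "real \<Rightarrow> real \<Rightarrow> real \<Rightarrow> real \<Rightarrow> real \<Rightarrow> real \<Rightarrow> real \<Rightarrow> real \<Rightarrow> real \<Rightarrow> real \<Rightarrow> real \<Rightarrow> real" where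
  "slow_holder_const T \<gamma> p q D M C1 Cp Ch Mf n =
     Mf * T powr (1 - \<gamma>)
     + (M * Ch + Cp * (2 powr q * Ch powr q * (C1 powr p + C1 powr q)) powr (1 / q)) * n
     + (D * D * (M * (Ch * (M * Ch))) + Cp * (2 * Ch * (M * Ch)) * C1) * n\<^sup>2 * T powr \<gamma>"

context
  fixes T p q \<gamma> Cp C1 Mf :: real
    and w1 :: "real \<Rightarrow> real^'d" and W1 :: "real \<Rightarrow> real \<Rightarrow> real^'d^'d" and w2 :: "real \<Rightarrow> real^'m"
    and h :: "real^'n \<Rightarrow> real^'d^'n" and Dh D2h D3h
    and f :: "real^'n \<Rightarrow> real^'m \<Rightarrow> real^'n" and g :: "real^'n \<Rightarrow> real^'m \<Rightarrow> real^'m"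
    and X :: "real \<Rightarrow> real^'n" and Y :: "real \<Rightarrow> real^'m" and X0 Y0 \<epsilon>
  assumes p: "0 < p" "1 \<le> p * \<gamma>" "q = p / 2"
    and geo: "geometric_holder_rough_path w1 W1 \<gamma> 0 T"
    and Cb3: "Cb3_with h Dh D2h D3h"
    and f_bound: "\<And>x y. norm (f x y) \<le> Mf"
    and solves: "solves_slow_fast T w1 W1 w2 f h Dh g X0 Y0 \<epsilon> X Y"
    and fin: "finite_pvar X p 0 T" "finite_qvar2 (sol_remainder w1 h X) q 0 T"
    and C1: "pvar X p 0 T \<le> C1" "qvar2 (sol_remainder w1 h X) q 0 T \<le> C1"
    and sew: "sewing_constant Cp w1 W1 p T TYPE('n)" "0 \<le> Cp"
begin

lemma apriori_const_nonneg: "0 \<le> C1"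
  using C1(1) order_trans[of 0 "pvar X p 0 T" C1] by (simp add: pvar_def)

lemma controlled_h_variation_le:
  assumes "0 \<le> s" "s < t" "t \<le> T"
  defines "Ch \<equiv> C_h_const h Dh D2h D3h"
  shows "finite_pvar (\<lambda>r. gub_deriv h Dh (X r)) p s t \<and>
      pvar (\<lambda>r. gub_deriv h Dh (X r)) p s t \<le> 2 * Ch * (real CARD('n) * real CARD('d) * Ch) * C1"
    and "finite_qvar2 (ctrl_remainder w1 (\<lambda>r. h (X r)) (\<lambda>r. gub_deriv h Dh (X r))) q s t \<and>
      qvar2 (ctrl_remainder w1 (\<lambda>r. h (X r)) (\<lambda>r. gub_deriv h Dh (X r))) q s t
        \<le> (2 powr q * Ch powr q * (C1 powr p + C1 powr q)) powr (1 / q)"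
proof -
  define L where "L = 2 * Ch * (real CARD('n) * real CARD('d) * Ch)"
  define K where "K = 2 powr q * Ch powr q"
  have "0 \<le> L"
    unfolding L_def Ch_def using Cb3_const_nonneg[OF Cb3] by simp
  have "finite_pvar (\<lambda>r. gub_deriv h Dh (X r)) p s t \<and> pvar (\<lambda>r. gub_deriv h Dh (X r)) p s t \<le> L * pvar X p 0 T"
    unfolding L_def Ch_def using assms p fin by (intro pvar_gub_deriv_comp_le[OF Cb3]) auto
  moreover have "L * pvar X p 0 T \<le> L * C1"
    using C1(1) \<open>0 \<le> L\<close> by (rule mult_left_mono)
  ultimately show "finite_pvar (\<lambda>r. gub_deriv h Dh (X r)) p s t \<and>
      pvar (\<lambda>r. gub_deriv h Dh (X r)) p s t \<le> 2 * Ch * (real CARD('n) * real CARD('d) * Ch) * C1"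
    unfolding L_def by linarith
  have "finite_qvar2 (ctrl_remainder w1 (\<lambda>r. h (X r)) (\<lambda>r. gub_deriv h Dh (X r))) q s t \<and>
      qvar2 (ctrl_remainder w1 (\<lambda>r. h (X r)) (\<lambda>r. gub_deriv h Dh (X r))) q s t
        \<le> (K * pvar X p 0 T powr p + K * qvar2 (sol_remainder w1 h X) q 0 T powr q) powr (1 / q)"
    unfolding K_def Ch_def using assms p fin by (intro qvar2_ctrl_remainder_comp_le[OF Cb3]) auto
  moreover have "(K * pvar X p 0 T powr p + K * qvar2 (sol_remainder w1 h X) q 0 T powr q) powr (1 / q)
      \<le> (K * (C1 powr p + C1 powr q)) powr (1 / q)"
    using C1 p unfolding K_def distrib_left
    by (intro powr_mono2 add_mono mult_left_mono) (auto simp: pvar_def qvar2_def)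
  ultimately show "finite_qvar2 (ctrl_remainder w1 (\<lambda>r. h (X r)) (\<lambda>r. gub_deriv h Dh (X r))) q s t \<and>
      qvar2 (ctrl_remainder w1 (\<lambda>r. h (X r)) (\<lambda>r. gub_deriv h Dh (X r))) q s t
        \<le> (2 powr q * Ch powr q * (C1 powr p + C1 powr q)) powr (1 / q)"
    unfolding K_def by linarith
qed

lemma sewing_remainder_le:
  assumes "0 \<le> s" "s < t" "t \<le> T"
  defines "n \<equiv> rp_holder_norm w1 W1 \<gamma> 0 T" and "Ch \<equiv> C_h_const h Dh D2h D3h"
  shows "norm (X t - X s - integral {s..t} (\<lambda>r. f (X r) (Y r)) - h (X s) *v (w1 t - w1 s)
      - second_order_term (gub_deriv h Dh (X s)) (W1 s t))
    \<le> Cp * (n * (t - s) powr \<gamma> * (2 powr q * Ch powr q * (C1 powr p + C1 powr q)) powr (1 / q)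
        + 2 * Ch * (real CARD('n) * real CARD('d) * Ch) * C1 * (n\<^sup>2 * (t - s) powr (2 * \<gamma>)))"
proof -
  define y where "y r = h (X r)" for r
  define y' where "y' r = gub_deriv h Dh (X r)" for r
  have bdd: "bdd_above (holder1_set w1 \<gamma> 0 T)" "bdd_above (holder2_set W1 \<gamma> 0 T)"
    using geo unfolding geometric_holder_rough_path_def by auto
  have w1: "finite_pvar w1 p s t \<and> pvar w1 p s t \<le> n * (t - s) powr \<gamma>"
    and W1: "qvar2 W1 q s t \<le> n\<^sup>2 * (t - s) powr (2 * \<gamma>)"
    unfolding n_def p(3) using rough_path_variation_le[OF bdd assms(1-3) p(1,2)] by auto
  note y' = controlled_h_variation_le(1)[OF assms(1-3), folded y'_def Ch_def]
  note Ry = controlled_h_variation_le(2)[OF assms(1-3), folded y_def y'_def Ch_def]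
  have "norm (X t - X s - integral {s..t} (\<lambda>r. f (X r) (Y r)) - y s *v (w1 t - w1 s)
      - second_order_term (y' s) (W1 s t))
    \<le> Cp * (pvar w1 p s t * qvar2 (ctrl_remainder w1 y y') q s t + pvar y' p s t * qvar2 W1 q s t)"
    using sew(1) solves_slow_fast_rough_increment(2)[OF solves assms(1-3)] y' Ry assms(1-3) p(3)
    unfolding sewing_constant_def y_def y'_def by blast
  also have "\<dots> \<le> Cp * (n * (t - s) powr \<gamma> * (2 powr q * Ch powr q * (C1 powr p + C1 powr q)) powr (1 / q)
      + 2 * Ch * (real CARD('n) * real CARD('d) * Ch) * C1 * (n\<^sup>2 * (t - s) powr (2 * \<gamma>)))"
    using w1 W1 y' Ry sew(2) rp_holder_norm_nonneg[OF bdd] assms(1-3) apriori_const_nonneg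
      Cb3_const_nonneg[OF Cb3]
    by (intro mult_left_mono add_mono mult_mono) (auto simp: pvar_def qvar2_def n_def Ch_def)
  finally show ?thesis
    unfolding y_def y'_def .
qed

lemma slow_increment_le:
  assumes st: "0 \<le> s" "s < t" "t \<le> T" and "\<gamma> < 1"
  shows "norm (X t - X s) \<le> slow_holder_const T \<gamma> p q (real CARD('d)) (real CARD('n) * real CARD('d))
    C1 Cp (C_h_const h Dh D2h D3h) Mf (rp_holder_norm w1 W1 \<gamma> 0 T) * (t - s) powr \<gamma>"
proof -
  define n where "n = rp_holder_norm w1 W1 \<gamma> 0 T"
  define ch where "ch = C_h_const h Dh D2h D3h"
  define M where "M = real CARD('n) * real CARD('d)"
  define Q where "Q = (2 powr q * ch powr q * (C1 powr p + C1 powr q)) powr (1 / q)"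
  define B where "B = (real CARD('d) * real CARD('d) * (M * (ch * (M * ch))) + Cp * (2 * ch * (M * ch)) * C1) * n\<^sup>2"
  define \<tau> where "\<tau> = (t - s) powr \<gamma>"
  define I where "I = integral {s..t} (\<lambda>r. f (X r) (Y r))"
  define A1 where "A1 = h (X s) *v (w1 t - w1 s)"
  define A2 where "A2 = second_order_term (gub_deriv h Dh (X s)) (W1 s t)"
  have bdd: "bdd_above (holder1_set w1 \<gamma> 0 T)" "bdd_above (holder2_set W1 \<gamma> 0 T)"
    using geo unfolding geometric_holder_rough_path_def by auto
  have "0 < \<gamma>"
    using p(1,2) zero_less_mult_pos[of p \<gamma>] by simp
  have "0 \<le> Mf"
    using f_bound norm_ge_zero order_trans by blast
  have "0 \<le> B"
    using rp_holder_norm_nonneg[OF bdd] Cb3_const_nonneg[OF Cb3] sew(2) apriori_const_nonneg st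
    by (simp add: B_def ch_def M_def)
  have "(\<lambda>r. f (X r) (Y r)) integrable_on cbox s t"
    using solves_slow_fast_rough_increment(1)[OF solves st] by (simp add: cbox_interval)
  from has_integral_bound[OF \<open>0 \<le> Mf\<close> integrable_integral[OF this]]
  have "norm I \<le> Mf * (t - s)"
    unfolding I_def using f_bound st by (simp add: cbox_interval)
  also have "\<dots> \<le> Mf * (T powr (1 - \<gamma>) * \<tau>)"
    using powr_le_scaled_powr[of "t - s" T \<gamma> 1] st \<open>\<gamma> < 1\<close> \<open>0 \<le> Mf\<close> unfolding \<tau>_def
    by (intro mult_left_mono) auto
  finally have drift: "norm I \<le> Mf * T powr (1 - \<gamma>) * \<tau>"
    by (simp add: mult.assoc)
  have first: "norm A1 \<le> M * ch * n * \<tau>"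
    and second: "norm A2 \<le> real CARD('d) * real CARD('d) * (M * (ch * (M * ch))) * n\<^sup>2 * (t - s) powr (2 * \<gamma>)"
    unfolding A1_def A2_def M_def ch_def n_def \<tau>_def using st
    by (intro rough_expansion_terms_le[OF Cb3 bdd]; simp)+
  have sewing: "norm (X t - X s - I - A1 - A2)
      \<le> Cp * Q * n * \<tau> + Cp * (2 * ch * (M * ch)) * C1 * n\<^sup>2 * (t - s) powr (2 * \<gamma>)"
    using sewing_remainder_le[OF st]
    unfolding I_def A1_def A2_def Q_def n_def ch_def M_def \<tau>_def by (simp add: algebra_simps)
  have "norm (X t - X s) = norm (I + A1 + A2 + (X t - X s - I - A1 - A2))"
    by simp
  also have "\<dots> \<le> norm I + norm A1 + norm A2 + norm (X t - X s - I - A1 - A2)"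
    by (intro norm_triangle_le add_mono order_refl)
  also have "\<dots> \<le> Mf * T powr (1 - \<gamma>) * \<tau> + (M * ch + Cp * Q) * n * \<tau> + B * (t - s) powr (2 * \<gamma>)"
    using drift first second sewing unfolding B_def by (simp add: algebra_simps)
  also have "B * (t - s) powr (2 * \<gamma>) \<le> B * (T powr \<gamma> * \<tau>)"
    using powr_le_scaled_powr[of "t - s" T \<gamma> "2 * \<gamma>"] st \<open>0 \<le> B\<close> \<open>0 < \<gamma>\<close> unfolding \<tau>_def
    by (intro mult_left_mono) auto
  finally show ?thesis
    unfolding slow_holder_const_def B_def Q_def n_def ch_def M_def \<tau>_def
    by (simp add: algebra_simps)
qed

end

lemma slow_holder_bound:
  fixes w1 :: "real \<Rightarrow> real^'d" and h :: "real^'n \<Rightarrow> real^'d^'n"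
    and f :: "real^'n \<Rightarrow> real^'m \<Rightarrow> real^'n"
    and X :: "real \<Rightarrow> real \<Rightarrow> real^'n" and Y :: "real \<Rightarrow> real \<Rightarrow> real^'m"
  assumes "0 < T" "0 < p" "1 \<le> p * \<gamma>" "\<gamma> < 1" "q = p / 2"
    and geo: "geometric_holder_rough_path w1 W1 \<gamma> 0 T"
    and Cb3: "Cb3_with h Dh D2h D3h"
    and f: "bounded (range (\<lambda>z. f (fst z) (snd z)))" "Mf = (SUP z. norm (f (fst z) (snd z)))"
    and solves: "\<forall>\<epsilon>\<in>{0<..1}. solves_slow_fast T w1 W1 w2 f h Dh g X0 Y0 \<epsilon> (X \<epsilon>) (Y \<epsilon>)"
    and apriori: "\<forall>\<epsilon>\<in>{0<..1}. finite_pvar (X \<epsilon>) p 0 T \<and> finite_qvar2 (sol_remainder w1 h (X \<epsilon>)) q 0 T \<and>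
      supnorm (X \<epsilon>) 0 T + pvar (X \<epsilon>) p 0 T + qvar2 (sol_remainder w1 h (X \<epsilon>)) q 0 T \<le> C1"
    and sew: "Cp > 1" "sewing_constant Cp w1 W1 p T TYPE('n)"
    and \<epsilon>: "\<epsilon> \<in> {0<..1}" and st: "0 \<le> s" "s < t" "t \<le> T"
  shows "norm (X \<epsilon> t - X \<epsilon> s) \<le> max 1 (slow_holder_const T \<gamma> p q (real CARD('d))
    (real CARD('n) * real CARD('d)) C1 Cp (C_h_const h Dh D2h D3h) Mf (rp_holder_norm w1 W1 \<gamma> 0 T))
    * (t - s) powr \<gamma>"
proof -
  have sol: "solves_slow_fast T w1 W1 w2 f h Dh g X0 Y0 \<epsilon> (X \<epsilon>) (Y \<epsilon>)"
    and fin: "finite_pvar (X \<epsilon>) p 0 T" "finite_qvar2 (sol_remainder w1 h (X \<epsilon>)) q 0 T"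
    and C1: "supnorm (X \<epsilon>) 0 T + pvar (X \<epsilon>) p 0 T + qvar2 (sol_remainder w1 h (X \<epsilon>)) q 0 T \<le> C1"
    using solves apriori \<epsilon> by auto
  have "0 \<le> supnorm (X \<epsilon>) 0 T"
    using sol \<open>0 < T\<close> unfolding solves_slow_fast_def by (intro supnorm_nonneg) auto
  then have "pvar (X \<epsilon>) p 0 T \<le> C1" "qvar2 (sol_remainder w1 h (X \<epsilon>)) q 0 T \<le> C1"
    using C1 by (auto simp: pvar_def qvar2_def intro: order_trans[rotated])
  moreover have "norm (f x y) \<le> Mf" for x y
    using bounded_norm_le_SUP_norm[OF f(1), of "(x, y)"] f(2) by simp
  ultimately have "norm (X \<epsilon> t - X \<epsilon> s) \<le> slow_holder_const T \<gamma> p q (real CARD('d))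
      (real CARD('n) * real CARD('d)) C1 Cp (C_h_const h Dh D2h D3h) Mf (rp_holder_norm w1 W1 \<gamma> 0 T)
      * (t - s) powr \<gamma>"
    using sew st assms(2-5)
    by (intro slow_increment_le[OF _ _ _ geo Cb3 _ sol fin]) auto
  then show ?thesis
    by (rule order_trans) (intro mult_right_mono; simp)
qed

theorem lemma3p4:
  fixes T H H' \<gamma> p q :: real
  assumes "T > 0"
    and "1/3 < H" "H \<le> 1/2" and "1/3 < H'" "H' \<le> 1/2"
    and "\<gamma> < min H H'"
    and "1/3 < 1/p" "1/p < \<gamma>"
    and "q = p / 2"
  shows "\<exists>C2 :: real \<Rightarrow> real \<Rightarrow> real \<Rightarrow> real \<Rightarrow> real \<Rightarrow> real \<Rightarrow> real.
    \<forall>(w1 :: real \<Rightarrow> real^'d1) W1 (w2 :: real \<Rightarrow> real^'m)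
      (f :: real^'n \<Rightarrow> real^'m \<Rightarrow> real^'n) (h :: real^'n \<Rightarrow> real^'d1^'n) Dh D2h D3h
      (g :: real^'n \<Rightarrow> real^'m \<Rightarrow> real^'m) X0 Y0
      (X :: real \<Rightarrow> real \<Rightarrow> real^'n) (Y :: real \<Rightarrow> real \<Rightarrow> real^'m)
      Cf Cg Mf C1 Cp.
      geometric_holder_rough_path w1 W1 \<gamma> 0 T \<and>
      continuous_on UNIV w2 \<and>
      Cf-lipschitz_on UNIV (\<lambda>z. f (fst z) (snd z)) \<and>
      Cb3_with h Dh D2h D3h \<and>
      Cg-lipschitz_on UNIV (\<lambda>z. g (fst z) (snd z)) \<and>
      bounded (range (\<lambda>z. f (fst z) (snd z))) \<and>
      Mf = (SUP z. norm (f (fst z) (snd z))) \<and>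
      (\<forall>\<epsilon>\<in>{0<..1}. solves_slow_fast T w1 W1 w2 f h Dh g X0 Y0 \<epsilon> (X \<epsilon>) (Y \<epsilon>)) \<and>
      (\<forall>\<epsilon>\<in>{0<..1}. finite_pvar (X \<epsilon>) p 0 T \<and>
         finite_qvar2 (sol_remainder w1 h (X \<epsilon>)) q 0 T \<and>
         supnorm (X \<epsilon>) 0 T + pvar (X \<epsilon>) p 0 T + qvar2 (sol_remainder w1 h (X \<epsilon>)) q 0 T \<le> C1) \<and>
      Cp > 1 \<and> sewing_constant Cp w1 W1 p T TYPE('n)
    \<longrightarrow> C2 C1 Cp Cf (C_h_const h Dh D2h D3h) Mf (rp_holder_norm w1 W1 \<gamma> 0 T) > 0 \<and>
        (\<forall>\<epsilon>\<in>{0<..1}. \<forall>s t. 0 \<le> s \<and> s < t \<and> t \<le> T \<longrightarrow>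
           norm (X \<epsilon> t - X \<epsilon> s)
             \<le> C2 C1 Cp Cf (C_h_const h Dh D2h D3h) Mf (rp_holder_norm w1 W1 \<gamma> 0 T) * (t - s) powr \<gamma>)"
proof -
  have "0 < 1 / p"
    using assms(7) by linarith
  then have p: "0 < p"
    by simp
  have p\<gamma>: "1 \<le> p * \<gamma>"
    using assms(8) p by (simp add: divide_less_eq mult.commute)
  have "\<gamma> < 1"
    using assms(3,6) by simp
  \<comment> \<open>\<gamma> < 1 is the only use of the Hurst indices; the Lipschitz constants of f and g and the
    path w2 do not enter the estimate.\<close>
  define C2 where "C2 C1 Cp Cf Ch Mf n = max 1 (slow_holder_const T \<gamma> p q
      (real CARD('d1)) (real CARD('n) * real CARD('d1)) C1 Cp Ch Mf n)" for C1 Cp Cf Ch Mf n :: real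
  show ?thesis
    by (intro exI[of _ C2] allI impI conjI ballI; elim conjE)
      (simp_all add: C2_def slow_holder_bound[OF assms(1) p p\<gamma> \<open>\<gamma> < 1\<close> assms(9)])
qed

end
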